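(* Fix a real number $\rho\ge 1$. For each positive integer $m$, let $L=2m+2\rho$ and consider the instance with one sensor at location $0$ with radius $\rho$ and $m$ sensors at locations $2k-1$ ($k=1,\dots,m$) with radius $1$. Let $A_m$ be the minimum cost of a feasible order-preserving solution and $O_m$ the minimum cost of a feasible solution of this instance. Then $A_m/O_m\to\rho$ as $m\to\infty$.
   Context: Barrier coverage problem: an instance consists of a barrier length $L>0$ and $n$ sensors; sensor $i$ has a location $x_i\in\mathbb{R}$ and a radius $r_i>0$. The sensors are indexed so that $x_1\le x_2\le\cdots\le x_n$. A solution is a vector $y\in\mathbb{R}^n$; sensor $i$ at $y_i$ covers $[y_i-r_i,y_i+r_i]$. The solution is feasible if $[0,L]\subseteq\bigcup_i [y_i-r_i,y_i+r_i]$; its cost is $\sum_i|y_i-x_i|$. A set $S$ is active for $y$ if $[0,L]\subseteq\bigcup_{i\in S}[y_i-r_i,y_i+r_i]$. A solution $y$ is order-preserving if it has an active set $S$ such that for all $i,j\in S$ with $i<j$ we have $y_i<y_j$. (In the instance, the ratio of largest to smallest radius is $\rho$.) *)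

theory Defs
  imports Complex_Main
begin

text \<open>Barrier coverage. Sensors are indexed 0..n-1 (i < n); x i location, r i radius,
  y i new position. Only the values of y on i < n matter.\<close>

definition active :: "(nat \<Rightarrow> real) \<Rightarrow> real \<Rightarrow> (nat \<Rightarrow> real) \<Rightarrow> nat set \<Rightarrow> bool" where
  "active r L y S \<longleftrightarrow> {0..L} \<subseteq> (\<Union>i\<in>S. {y i - r i .. y i + r i})"

definition feasible :: "nat \<Rightarrow> (nat \<Rightarrow> real) \<Rightarrow> real \<Rightarrow> (nat \<Rightarrow> real) \<Rightarrow> bool" where
  "feasible n r L y \<longleftrightarrow> active r L y {..<n}"

definition order_preserving :: "nat \<Rightarrow> (nat \<Rightarrow> real) \<Rightarrow> real \<Rightarrow> (nat \<Rightarrow> real) \<Rightarrow> bool" where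
  "order_preserving n r L y \<longleftrightarrow>
     (\<exists>S \<subseteq> {..<n}. active r L y S \<and> (\<forall>i\<in>S. \<forall>j\<in>S. i < j \<longrightarrow> y i < y j))"

definition cost :: "nat \<Rightarrow> (nat \<Rightarrow> real) \<Rightarrow> (nat \<Rightarrow> real) \<Rightarrow> real" where
  "cost n x y = (\<Sum>i<n. \<bar>y i - x i\<bar>)"

definition opt_cost :: "nat \<Rightarrow> (nat \<Rightarrow> real) \<Rightarrow> (nat \<Rightarrow> real) \<Rightarrow> real \<Rightarrow> real" where
  "opt_cost n x r L = Inf (cost n x ` {y. feasible n r L y})"

definition op_opt_cost :: "nat \<Rightarrow> (nat \<Rightarrow> real) \<Rightarrow> (nat \<Rightarrow> real) \<Rightarrow> real \<Rightarrow> real" where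
  "op_opt_cost n x r L = Inf (cost n x ` {y. feasible n r L y \<and> order_preserving n r L y})"

definition inst_x :: "nat \<Rightarrow> real" where
  "inst_x i = (if i = 0 then 0 else 2 * real i - 1)"

definition inst_r :: "real \<Rightarrow> nat \<Rightarrow> real" where
  "inst_r \<rho> i = (if i = 0 then \<rho> else 1)"

end

theory Submission
  imports Defs "HOL-Analysis.Analysis" "HOL-Real_Asymp.Real_Asymp"
begin

text \<open>Integrating the weight \<open>t\<^sub>+\<close> over the barrier shows that every cover satisfies
  \<open>L\<^sup>2/2 \<le> \<Sum>\<^sub>i 2 r\<^sub>i max y\<^sub>i r\<^sub>i\<close>, so a sensor's share of the "first moment" grows with its
  position. At their home positions the unit sensors supply only about \<open>2m\<^sup>2\<close> of the
  required \<open>2m\<^sup>2 + 4m\<rho> + 2\<rho>\<^sup>2\<close>, and the rest must be bought by displacement. Without order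
  constraints the big sensor buys it cheaply by moving to the right end (cost about \<open>2m\<close>).
  In an order-preserving solution the big sensor is the leftmost sensor of the active set and
  must cover 0, so it stays at \<open>y\<^sub>0 \<le> \<rho>\<close>, and the unit sensors have to move by about \<open>2m\<rho>\<close>
  in total. Both bounds are attained up to \<open>O(\<rho>)\<close>, so the ratio tends to \<open>\<rho>\<close>.\<close>

lemma mono_diff_le_sum_interval_cover:
  fixes \<mu> :: "real \<Rightarrow> real" and a b :: "nat \<Rightarrow> real"
  assumes mono: "mono \<mu>"
  shows "finite S \<Longrightarrow> (\<And>i. i \<in> S \<Longrightarrow> a i \<le> b i) \<Longrightarrow> u \<le> v \<Longrightarrow>
    {u..v} \<subseteq> (\<Union>i\<in>S. {a i..b i}) \<Longrightarrow> \<mu> v - \<mu> u \<le> (\<Sum>i\<in>S. \<mu> (b i) - \<mu> (a i))"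
proof (induction "card S" arbitrary: S v rule: less_induct)
  case less
  have "v \<in> {u..v}" using less.prems(3) by simp
  then have "v \<in> (\<Union>i\<in>S. {a i..b i})" using less.prems(4) by blast
  then obtain i where i: "i \<in> S" "a i \<le> v" "v \<le> b i" by auto
  have "(\<Sum>j\<in>S. \<mu> (b j) - \<mu> (a j)) = (\<mu> (b i) - \<mu> (a i)) + (\<Sum>j\<in>S-{i}. \<mu> (b j) - \<mu> (a j))"
    using less.prems(1) i(1) by (rule sum.remove)
  moreover have rest_nonneg: "0 \<le> (\<Sum>j\<in>S-{i}. \<mu> (b j) - \<mu> (a j))"
    using mono less.prems(2) by (intro sum_nonneg) (simp add: monoD)
  moreover have "\<mu> v \<le> \<mu> (b i)" using mono i by (simp add: monoD)
  moreover have "\<mu> (a i) - \<mu> u \<le> (\<Sum>j\<in>S-{i}. \<mu> (b j) - \<mu> (a j))"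
  proof (cases "a i \<le> u")
    case True
    have "\<mu> (a i) \<le> \<mu> u" using mono True by (rule monoD)
    then show ?thesis using rest_nonneg by linarith
  next
    case False
    \<comment> \<open>the other intervals cover \<open>[u, a\<^sub>i)\<close>, hence by closedness also \<open>[u, a\<^sub>i]\<close>\<close>
    have "{u..<a i} \<subseteq> (\<Union>j\<in>S-{i}. {a j..b j})"
    proof
      fix w assume w: "w \<in> {u..<a i}"
      then obtain j where "j \<in> S" "w \<in> {a j..b j}" using less.prems(4) i by force
      moreover have "j \<noteq> i" using w calculation by auto
      ultimately show "w \<in> (\<Union>j\<in>S-{i}. {a j..b j})" by auto
    qed
    then have "closure {u..<a i} \<subseteq> (\<Union>j\<in>S-{i}. {a j..b j})"
      using less.prems(1) by (intro closure_minimal closed_UN) auto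
    then have "{u..a i} \<subseteq> (\<Union>j\<in>S-{i}. {a j..b j})" using False by simp
    moreover have "card (S-{i}) < card S" using less.prems(1) i(1) by (rule card_Diff1_less)
    ultimately show ?thesis using less.hyps[of "S-{i}" "a i"] less.prems False by auto
  qed
  ultimately show ?case by linarith
qed

lemma positive_part_square_increment_le:
  fixes y r :: real
  assumes "r \<ge> 0"
  shows "(max (y + r) 0)\<^sup>2 / 2 - (max (y - r) 0)\<^sup>2 / 2 \<le> 2 * r * max y r"
proof (cases "y \<ge> r")
  case True
  then have "max (y + r) 0 = y + r" "max (y - r) 0 = y - r" "max y r = y" using assms by auto
  moreover have "(y + r)\<^sup>2 / 2 - (y - r)\<^sup>2 / 2 = 2 * r * y"
    by (simp add: power2_eq_square field_simps)
  ultimately show ?thesis by simp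
next
  case False
  then have "(max (y + r) 0)\<^sup>2 \<le> (2 * r)\<^sup>2" using assms by (intro power_mono) auto
  then show ?thesis using False assms by (simp add: power2_eq_square)
qed

lemma active_moment_bound:
  fixes r y :: "nat \<Rightarrow> real"
  assumes "finite S" "\<And>i. i \<in> S \<Longrightarrow> r i \<ge> 0" "0 \<le> L" "active r L y S"
  shows "L\<^sup>2 / 2 \<le> (\<Sum>i\<in>S. 2 * r i * max (y i) (r i))"
proof -
  define \<mu> where "\<mu> t = (max t 0)\<^sup>2 / 2" for t :: real
  have "mono \<mu>" unfolding \<mu>_def mono_def by (auto intro!: power_mono divide_right_mono)
  moreover have "{0..L} \<subseteq> (\<Union>i\<in>S. {y i - r i..y i + r i})"
    using assms(4) by (simp add: active_def)
  ultimately have "\<mu> L - \<mu> 0 \<le> (\<Sum>i\<in>S. \<mu> (y i + r i) - \<mu> (y i - r i))"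
    using assms(1-3) by (intro mono_diff_le_sum_interval_cover) simp_all
  also have "\<dots> \<le> (\<Sum>i\<in>S. 2 * r i * max (y i) (r i))"
    using assms(2) unfolding \<mu>_def by (intro sum_mono positive_part_square_increment_le)
  finally show ?thesis using assms(3) by (simp add: \<mu>_def)
qed

lemma active_mono: "active r L y S \<Longrightarrow> S \<subseteq> T \<Longrightarrow> active r L y T"
  unfolding active_def by blast

lemma active_cong: "(\<And>i. i \<in> S \<Longrightarrow> y' i = y i) \<Longrightarrow> active r L y' S = active r L y S"
  unfolding active_def by simp

lemma Inf_image_between:
  fixes f :: "'a \<Rightarrow> real"
  assumes "a \<in> A" "f a \<le> u" "\<And>x. x \<in> A \<Longrightarrow> l \<le> f x"
  shows "l \<le> Inf (f ` A)" "Inf (f ` A) \<le> u"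
proof -
  show "l \<le> Inf (f ` A)" using assms by (intro cInf_greatest) auto
  have "Inf (f ` A) \<le> f a" using assms by (intro cInf_lower bdd_belowI[of _ l]) auto
  then show "Inf (f ` A) \<le> u" using assms(2) by linarith
qed

lemma cost_inst_Suc:
  "cost (Suc m) inst_x y = \<bar>y 0\<bar> + (\<Sum>i<m. \<bar>y (Suc i) - inst_x (Suc i)\<bar>)"
  unfolding cost_def sum.lessThan_Suc_shift by (simp add: inst_x_def)

lemma sum_inst_x_units: "(\<Sum>i<m. inst_x (Suc i)) = (real m)\<^sup>2"
  by (induction m) (auto simp: inst_x_def power2_eq_square algebra_simps)

lemma inst_moment_bound:
  assumes "\<rho> \<ge> 1" "feasible (Suc m) (inst_r \<rho>) (2 * real m + 2 * \<rho>) y"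
  shows "2 * real m * \<rho> + \<rho>\<^sup>2 \<le> \<rho> * max (y 0) \<rho> + (\<Sum>i<m. \<bar>y (Suc i) - inst_x (Suc i)\<bar>)"
proof -
  have "0 \<le> inst_r \<rho> i" for i using assms(1) by (simp add: inst_r_def)
  then have "(2 * real m + 2 * \<rho>)\<^sup>2 / 2 \<le> (\<Sum>i<Suc m. 2 * inst_r \<rho> i * max (y i) (inst_r \<rho> i))"
    using assms unfolding feasible_def by (intro active_moment_bound) auto
  also have "\<dots> = 2 * \<rho> * max (y 0) \<rho> + 2 * (\<Sum>i<m. max (y (Suc i)) 1)"
    unfolding sum.lessThan_Suc_shift by (simp add: inst_r_def sum_distrib_left)
  finally have moment:
    "(2 * real m + 2 * \<rho>)\<^sup>2 / 2 \<le> 2 * \<rho> * max (y 0) \<rho> + 2 * (\<Sum>i<m. max (y (Suc i)) 1)" .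
  have "(\<Sum>i<m. max (y (Suc i)) 1) - (real m)\<^sup>2 = (\<Sum>i<m. max (y (Suc i)) 1 - inst_x (Suc i))"
    by (simp add: sum_subtractf sum_inst_x_units)
  also have "\<dots> \<le> (\<Sum>i<m. \<bar>y (Suc i) - inst_x (Suc i)\<bar>)"
    by (intro sum_mono) (auto simp: inst_x_def)
  finally show ?thesis using moment by (simp add: power2_eq_square algebra_simps)
qed

lemma feasible_inst_cost_ge:
  assumes "\<rho> \<ge> 1" "feasible (Suc m) (inst_r \<rho>) (2 * real m + 2 * \<rho>) y"
  shows "2 * real m \<le> cost (Suc m) inst_x y"
proof (cases "y 0 \<ge> 2 * real m + \<rho>")
  case True
  have "0 \<le> (\<Sum>i<m. \<bar>y (Suc i) - inst_x (Suc i)\<bar>)" by (intro sum_nonneg) auto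
  then show ?thesis using True assms(1) unfolding cost_inst_Suc by linarith
next
  case False
  define z where "z = max (y 0) \<rho>"
  have "z - \<rho> \<le> \<bar>y 0\<bar>" using assms(1) by (auto simp: z_def)
  moreover have "(\<rho> - 1) * z \<le> (\<rho> - 1) * (2 * real m + \<rho>)"
    using False assms(1) by (intro mult_left_mono) (auto simp: z_def)
  moreover note inst_moment_bound[OF assms, folded z_def]
  ultimately show ?thesis unfolding cost_inst_Suc by (simp add: power2_eq_square algebra_simps)
qed

lemma order_preserving_inst_cost_ge:
  assumes "\<rho> \<ge> 1" "order_preserving (Suc m) (inst_r \<rho>) (2 * real m + 2 * \<rho>) y"
  shows "2 * real m * \<rho> \<le> cost (Suc m) inst_x y"
proof -
  let ?L = "2 * real m + 2 * \<rho>"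
  obtain S where S: "S \<subseteq> {..<Suc m}" "active (inst_r \<rho>) ?L y S"
    "\<forall>i\<in>S. \<forall>j\<in>S. i < j \<longrightarrow> y i < y j"
    using assms(2) unfolding order_preserving_def by blast
  \<comment> \<open>sensor 0 is leftmost in \<open>S\<close>, and some sensor of \<open>S\<close> reaches the point 0\<close>
  have left: "y 0 \<le> \<rho>" if "0 \<in> S"
  proof -
    have "(0::real) \<in> {0..?L}" using assms(1) by simp
    then have "(0::real) \<in> (\<Union>i\<in>S. {y i - inst_r \<rho> i..y i + inst_r \<rho> i})"
      using S(2) unfolding active_def by blast
    then obtain j where j: "j \<in> S" "y j - inst_r \<rho> j \<le> 0" by auto
    show ?thesis
    proof (cases "j = 0")
      case False
      then have "y 0 < y j" using S(3) j(1) that by auto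
      then show ?thesis using j False assms(1) by (simp add: inst_r_def)
    qed (use j in \<open>simp add: inst_r_def\<close>)
  qed
  \<comment> \<open>clamping \<open>y\<^sub>0\<close> at \<open>\<rho>\<close> does not change \<open>y\<close> on \<open>S\<close>, and it minimises the big sensor's moment term\<close>
  define y' where "y' = y(0 := min (y 0) \<rho>)"
  have "active (inst_r \<rho>) ?L y' S"
    using S(2) left by (subst active_cong[of S y' y]) (auto simp: y'_def)
  then have "feasible (Suc m) (inst_r \<rho>) ?L y'"
    unfolding feasible_def using S(1) by (rule active_mono)
  from inst_moment_bound[OF assms(1) this]
  have "2 * real m * \<rho> \<le> (\<Sum>i<m. \<bar>y (Suc i) - inst_x (Suc i)\<bar>)"
    by (simp add: y'_def power2_eq_square)
  then show ?thesis unfolding cost_inst_Suc by linarith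
qed

lemma unit_intervals_cover:
  assumes "0 \<le> t" "t \<le> 2 * real m" "m \<ge> 1"
  obtains k where "1 \<le> k" "k \<le> m" "2 * real k - 2 \<le> t" "t \<le> 2 * real k"
proof
  define c where "c = nat \<lceil>t / 2\<rceil>"
  define k where "k = max 1 c"
  have "real c = of_int \<lceil>t / 2\<rceil>" using assms(1) by (simp add: c_def)
  then have c: "t / 2 \<le> real c" "real c < t / 2 + 1" by linarith+
  have "real k = max 1 (real c)" by (simp add: k_def)
  then show "2 * real k - 2 \<le> t" "t \<le> 2 * real k" using c assms(1) by auto
  show "1 \<le> k" by (simp add: k_def)
  have "c \<le> m" using c assms(2) by linarith
  then show "k \<le> m" using assms(3) by (simp add: k_def)
qed

definition big_sensor_right :: "nat \<Rightarrow> real \<Rightarrow> nat \<Rightarrow> real" where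
  "big_sensor_right m \<rho> i = (if i = 0 then 2 * real m + \<rho> else inst_x i)"

definition units_shifted :: "real \<Rightarrow> nat \<Rightarrow> real" where
  "units_shifted \<rho> i = (if i = 0 then \<rho> else inst_x i + 2 * \<rho>)"

lemma feasible_big_sensor_right:
  assumes "\<rho> \<ge> 1" "m \<ge> 1"
  shows "feasible (Suc m) (inst_r \<rho>) (2 * real m + 2 * \<rho>) (big_sensor_right m \<rho>)"
  unfolding feasible_def active_def
proof
  fix t assume t: "t \<in> {0..2 * real m + 2 * \<rho>}"
  show "t \<in> (\<Union>i\<in>{..<Suc m}. {big_sensor_right m \<rho> i - inst_r \<rho> i..big_sensor_right m \<rho> i + inst_r \<rho> i})"
  proof (cases "t \<ge> 2 * real m")
    case True
    then show ?thesis using t by (intro UN_I[of 0]) (auto simp: big_sensor_right_def inst_r_def)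
  next
    case False
    obtain k where "1 \<le> k" "k \<le> m" "2 * real k - 2 \<le> t" "t \<le> 2 * real k"
      by (rule unit_intervals_cover[of t m]) (use t assms False in auto)
    then show ?thesis
      by (intro UN_I[of k]) (auto simp: big_sensor_right_def inst_r_def inst_x_def)
  qed
qed

lemma feasible_units_shifted:
  assumes "\<rho> \<ge> 1" "m \<ge> 1"
  shows "feasible (Suc m) (inst_r \<rho>) (2 * real m + 2 * \<rho>) (units_shifted \<rho>)"
  unfolding feasible_def active_def
proof
  fix t assume t: "t \<in> {0..2 * real m + 2 * \<rho>}"
  show "t \<in> (\<Union>i\<in>{..<Suc m}. {units_shifted \<rho> i - inst_r \<rho> i..units_shifted \<rho> i + inst_r \<rho> i})"
  proof (cases "t \<le> 2 * \<rho>")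
    case True
    then show ?thesis using t by (intro UN_I[of 0]) (auto simp: units_shifted_def inst_r_def)
  next
    case False
    obtain k where "1 \<le> k" "k \<le> m" "2 * real k - 2 \<le> t - 2 * \<rho>" "t - 2 * \<rho> \<le> 2 * real k"
      by (rule unit_intervals_cover[of "t - 2 * \<rho>" m]) (use t assms False in auto)
    then show ?thesis
      by (intro UN_I[of k]) (auto simp: units_shifted_def inst_r_def inst_x_def)
  qed
qed

lemma order_preserving_units_shifted:
  assumes "\<rho> \<ge> 1" "m \<ge> 1"
  shows "order_preserving (Suc m) (inst_r \<rho>) (2 * real m + 2 * \<rho>) (units_shifted \<rho>)"
  unfolding order_preserving_def
proof (intro exI[of _ "{..<Suc m}"] conjI)
  show "active (inst_r \<rho>) (2 * real m + 2 * \<rho>) (units_shifted \<rho>) {..<Suc m}"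
    using feasible_units_shifted[OF assms] by (simp add: feasible_def)
  show "\<forall>i\<in>{..<Suc m}. \<forall>j\<in>{..<Suc m}. i < j \<longrightarrow> units_shifted \<rho> i < units_shifted \<rho> j"
    using assms(1) by (auto simp: units_shifted_def inst_x_def)
qed auto

lemma inst_optimal_cost_bounds:
  assumes "\<rho> \<ge> 1" "m \<ge> 1"
  defines "L \<equiv> 2 * real m + 2 * \<rho>"
  shows "2 * real m \<le> opt_cost (m + 1) inst_x (inst_r \<rho>) L"
    "opt_cost (m + 1) inst_x (inst_r \<rho>) L \<le> 2 * real m + \<rho>"
    "2 * real m * \<rho> \<le> op_opt_cost (m + 1) inst_x (inst_r \<rho>) L"
    "op_opt_cost (m + 1) inst_x (inst_r \<rho>) L \<le> \<rho> + 2 * real m * \<rho>"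
proof -
  let ?F = "{y. feasible (Suc m) (inst_r \<rho>) L y}"
  let ?G = "{y. feasible (Suc m) (inst_r \<rho>) L y \<and> order_preserving (Suc m) (inst_r \<rho>) L y}"
  have "big_sensor_right m \<rho> \<in> ?F"
    using feasible_big_sensor_right[OF assms(1,2)] by (simp add: L_def)
  moreover have "cost (Suc m) inst_x (big_sensor_right m \<rho>) \<le> 2 * real m + \<rho>"
    using assms(1) by (simp add: cost_inst_Suc big_sensor_right_def)
  moreover have "2 * real m \<le> cost (Suc m) inst_x y" if "y \<in> ?F" for y
    using feasible_inst_cost_ge[OF assms(1)] that by (simp add: L_def)
  ultimately show "2 * real m \<le> opt_cost (m + 1) inst_x (inst_r \<rho>) L"
    "opt_cost (m + 1) inst_x (inst_r \<rho>) L \<le> 2 * real m + \<rho>"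
    unfolding opt_cost_def Suc_eq_plus1[symmetric] by (auto intro: Inf_image_between)
  have "units_shifted \<rho> \<in> ?G"
    using feasible_units_shifted[OF assms(1,2)] order_preserving_units_shifted[OF assms(1,2)]
    by (simp add: L_def)
  moreover have "cost (Suc m) inst_x (units_shifted \<rho>) \<le> \<rho> + 2 * real m * \<rho>"
    using assms(1) by (simp add: cost_inst_Suc units_shifted_def)
  moreover have "2 * real m * \<rho> \<le> cost (Suc m) inst_x y" if "y \<in> ?G" for y
    using order_preserving_inst_cost_ge[OF assms(1)] that by (simp add: L_def)
  ultimately show "2 * real m * \<rho> \<le> op_opt_cost (m + 1) inst_x (inst_r \<rho>) L"
    "op_opt_cost (m + 1) inst_x (inst_r \<rho>) L \<le> \<rho> + 2 * real m * \<rho>"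
    unfolding op_opt_cost_def Suc_eq_plus1[symmetric] by (auto intro: Inf_image_between)
qed

theorem lemma5:
  fixes \<rho> :: real
  assumes "\<rho> \<ge> 1"
  shows "(\<lambda>m. op_opt_cost (m + 1) inst_x (inst_r \<rho>) (2 * real m + 2 * \<rho>)
             / opt_cost (m + 1) inst_x (inst_r \<rho>) (2 * real m + 2 * \<rho>))
         \<longlonglongrightarrow> \<rho>"
proof (rule tendsto_sandwich)
  let ?op = "\<lambda>m. op_opt_cost (m + 1) inst_x (inst_r \<rho>) (2 * real m + 2 * \<rho>)"
  let ?opt = "\<lambda>m. opt_cost (m + 1) inst_x (inst_r \<rho>) (2 * real m + 2 * \<rho>)"
  have bounds: "\<forall>\<^sub>F m in sequentially. 0 < 2 * real m \<and> 0 \<le> 2 * real m * \<rho> \<and>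
      2 * real m * \<rho> \<le> ?op m \<and> ?op m \<le> \<rho> + 2 * real m * \<rho> \<and>
      2 * real m \<le> ?opt m \<and> ?opt m \<le> 2 * real m + \<rho>"
    using eventually_ge_at_top[of 1]
    by eventually_elim (use inst_optimal_cost_bounds[OF assms] assms in auto)
  show "\<forall>\<^sub>F m in sequentially. 2 * real m * \<rho> / (2 * real m + \<rho>) \<le> ?op m / ?opt m"
    using bounds by eventually_elim (intro frac_le; linarith)
  show "\<forall>\<^sub>F m in sequentially. ?op m / ?opt m \<le> (\<rho> + 2 * real m * \<rho>) / (2 * real m)"
    using bounds by eventually_elim (intro frac_le; linarith)
  show "(\<lambda>m. 2 * real m * \<rho> / (2 * real m + \<rho>)) \<longlonglongrightarrow> \<rho>"
    "(\<lambda>m. (\<rho> + 2 * real m * \<rho>) / (2 * real m)) \<longlonglongrightarrow> \<rho>"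
    by real_asymp+
qed

end
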